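(* Let $\lambda_2,\lambda_3,\lambda_8,\lambda_9$ and $\mathfrak{k}_1=\mathrm{span}_{\mathbb{R}}(\lambda_1,\lambda_2,\lambda_3)$, $\mathfrak{k}_2=\mathrm{span}_{\mathbb{R}}(\lambda_8,\lambda_9,\lambda_{10})$ be as in the context, and let $\hat K:=\langle e^{\mathfrak{k}_1}\rangle\times\langle e^{\mathfrak{k}_2}\rangle$ (each factor isomorphic to $SU(2)$). Put $K_1=\{e^{x\lambda_3}:x\in[0,\pi]\}$, $A_1=\{e^{x\lambda_2}:x\in[0,\frac{\pi}{2}]\}$, $K_1'=\{e^{x\lambda_3}:x\in[0,2\pi]\}$, $K_2=\{e^{x\lambda_8}:x\in[0,\pi]\}$, $A_2=\{e^{x\lambda_9}:x\in[0,\frac{\pi}{2}]\}$, $K_2'=\{e^{x\lambda_8}:x\in[0,2\pi]\}$. Then, up to a measure zero set, $\hat K\simeq K_1A_1K_1'\times K_2A_2K_2'$ as manifolds; that is, the map $(\phi_1,\psi_1,\omega_1,\phi_2,\psi_2,\omega_2)\mapsto(e^{\phi_1\lambda_3}e^{\psi_1\lambda_2}e^{\omega_1\lambda_3},\,e^{\phi_2\lambda_8}e^{\psi_2\lambda_9}e^{\omega_2\lambda_8})$ from $[0,\pi]\times[0,\frac{\pi}{2}]\times[0,2\pi]\times[0,\pi]\times[0,\frac{\pi}{2}]\times[0,2\pi]$ to $\hat K$ is a diffeomorphism up to a set of measure zero.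
   Context: Let $A_{ab}$ ($1\le a,b\le 7$) denote the $7\times7$ real matrix with $+1$ in entry $(a,b)$, $-1$ in entry $(b,a)$ and zeros elsewhere. Define $\lambda_1=-A_{47}-A_{56}$, $\lambda_2=A_{46}-A_{57}$, $\lambda_3=-A_{45}-A_{67}$, $\lambda_8=-2A_{23}+A_{45}-A_{67}$, $\lambda_9=-2A_{12}+A_{47}-A_{56}$, $\lambda_{10}=-2A_{13}-A_{46}-A_{57}$. Here $\langle e^{\mathfrak{k}_i}\rangle$ denotes the subgroup of $GL(7,\mathbb{R})$ generated by $\exp(\mathfrak{k}_i)$. *)

theory Defs
  imports "HOL-Analysis.Analysis" "HOL-Library.Numeral_Type"
begin

type_synonym mat7 = "real^7^7"

text \<open>A_ab: +1 at entry (a,b), -1 at entry (b,a); indices 1..7 embedded into the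
  index type 7 via of_nat (injective on 1..7).\<close>
definition Aab :: "nat \<Rightarrow> nat \<Rightarrow> mat7" where
  "Aab a b = (\<chi> i j. (if i = of_nat a \<and> j = of_nat b then 1 else 0)
                    - (if i = of_nat b \<and> j = of_nat a then 1 else 0))"

definition lam1 :: mat7 where "lam1 = - Aab 4 7 - Aab 5 6"
definition lam2 :: mat7 where "lam2 = Aab 4 6 - Aab 5 7"
definition lam3 :: mat7 where "lam3 = - Aab 4 5 - Aab 6 7"
definition lam8 :: mat7 where "lam8 = - 2 *\<^sub>R Aab 2 3 + Aab 4 5 - Aab 6 7"
definition lam9 :: mat7 where "lam9 = - 2 *\<^sub>R Aab 1 2 + Aab 4 7 - Aab 5 6"
definition lam10 :: mat7 where "lam10 = - 2 *\<^sub>R Aab 1 3 - Aab 4 6 - Aab 5 7"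

fun mpow :: "mat7 \<Rightarrow> nat \<Rightarrow> mat7" where
  "mpow M 0 = mat 1"
| "mpow M (Suc n) = M ** mpow M n"

definition mexp :: "mat7 \<Rightarrow> mat7" where
  "mexp M = (\<Sum>n. (1 / fact n) *\<^sub>R mpow M n)"

definition k1 :: "mat7 set" where "k1 = span {lam1, lam2, lam3}"
definition k2 :: "mat7 set" where "k2 = span {lam8, lam9, lam10}"

inductive_set gen_group :: "mat7 set \<Rightarrow> mat7 set" for S where
  gen_one: "mat 1 \<in> gen_group S"
| gen_mul: "s \<in> S \<Longrightarrow> g \<in> gen_group S \<Longrightarrow> s ** g \<in> gen_group S"
| gen_inv: "s \<in> S \<Longrightarrow> g \<in> gen_group S \<Longrightarrow> matrix_inv s ** g \<in> gen_group S"

definition Khat :: "(mat7 \<times> mat7) set" where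
  "Khat = gen_group (mexp ` k1) \<times> gen_group (mexp ` k2)"

definition euler_map :: "real \<times> real \<times> real \<times> real \<times> real \<times> real \<Rightarrow> mat7 \<times> mat7" where
  "euler_map = (\<lambda>(p1, s1, w1, p2, s2, w2).
     (mexp (p1 *\<^sub>R lam3) ** mexp (s1 *\<^sub>R lam2) ** mexp (w1 *\<^sub>R lam3),
      mexp (p2 *\<^sub>R lam8) ** mexp (s2 *\<^sub>R lam9) ** mexp (w2 *\<^sub>R lam8)))"

definition param_box :: "(real \<times> real \<times> real \<times> real \<times> real \<times> real) set" where
  "param_box = {0..pi} \<times> {0..pi/2} \<times> {0..2*pi} \<times> {0..pi} \<times> {0..pi/2} \<times> {0..2*pi}"

end

theory Submission
  imports Defs
begin

text \<open>
  Both factors of \<open>Khat\<close> are images of the unit quaternions under explicit multiplicative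
  polynomial maps \<open>rep_k1, rep_k2\<close> into the 7 by 7 matrices, which send \<open>e^(i t)\<close> and
  \<open>e^(j t)\<close> to \<open>exp (t lam3)\<close> and \<open>exp (t lam2)\<close>, respectively to \<open>exp (t lam8)\<close> and
  \<open>exp (t lam9)\<close>. The exponentials are computed with the Rodrigues formula, valid for generators
  with \<open>N\<^sup>3 = -N\<close>; \<open>lam8, lam9, lam10\<close> split into a rotation part and a spin part of this
  kind which annihilate each other. Hence the Euler map is \<open>rep_k1 \<times> rep_k2\<close> composed with a
  pair of Hopf coordinate maps \<open>(p, s, w) \<mapsto> e^(i p) e^(j s) e^(i w)\<close> of the 3-sphere. These
  are onto from the closed box, do not identify an interior point with any other point of the
  box, and are immersions in the interior. The maps \<open>rep_k1, rep_k2\<close> have linear left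
  inverses (read off one matrix row), so all of this passes to the Euler map; compactness of the
  box then makes it a homeomorphism from the open box onto an open part of \<open>Khat\<close>, and the
  boundary of the box is a null set.
\<close>

section \<open>Entries of 7 by 7 matrices\<close>

text \<open>The indices \<open>1, \<dots>, 7\<close> of the paper are the elements \<open>of_nat 1, \<dots>, of_nat 7\<close> of
  the index type \<open>7\<close>, in which \<open>7 = 0\<close>. Identities between explicit matrices are proved
  entrywise with \<open>simp only: mat7_entry_simps\<close> followed by polynomial normalisation; with the
  full simpset, deciding equalities of numerals of type \<open>7\<close> is slower by an order of magnitude.\<close>

lemma Aab_nth:
  "Aab a b $ i $ j =
     (if i = of_nat a \<and> j = of_nat b then 1 else 0) - (if i = of_nat b \<and> j = of_nat a then 1 else 0)"
  by (simp add: Aab_def)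

lemma UNIV_7: "(UNIV :: 7 set) = {1, 2, 3, 4, 5, 6, 0}"
proof -
  have "card ({1, 2, 3, 4, 5, 6, 0} :: 7 set) = CARD(7)"
    by simp
  then show ?thesis
    by (intro card_subset_eq[symmetric]) auto
qed

lemma all_7: "(\<forall>i::7. P i) \<longleftrightarrow> P 1 \<and> P 2 \<and> P 3 \<and> P 4 \<and> P 5 \<and> P 6 \<and> P 0"
  by (simp only: UNIV_7 ball_simps simp_thms flip: ball_UNIV)

lemma sum_7: "(\<Sum>i\<in>UNIV. f i) = f (1::7) + f 2 + f 3 + f 4 + f 5 + f 6 + f 0"
  unfolding UNIV_7 by (subst sum.insert, simp, simp)+ (simp add: add.assoc)

lemma index_7_neq:
  "(0::7) \<noteq> 1" "(0::7) \<noteq> 2" "(0::7) \<noteq> 3" "(0::7) \<noteq> 4" "(0::7) \<noteq> 5" "(0::7) \<noteq> 6"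
  "(1::7) \<noteq> 2" "(1::7) \<noteq> 3" "(1::7) \<noteq> 4" "(1::7) \<noteq> 5" "(1::7) \<noteq> 6"
  "(2::7) \<noteq> 3" "(2::7) \<noteq> 4" "(2::7) \<noteq> 5" "(2::7) \<noteq> 6"
  "(3::7) \<noteq> 4" "(3::7) \<noteq> 5" "(3::7) \<noteq> 6"
  "(4::7) \<noteq> 5" "(4::7) \<noteq> 6"
  "(5::7) \<noteq> 6"
  by simp_all

lemma numeral_7_eq_0: "(7::7) = 0"
  by simp

lemmas mat7_entry_simps =
  vec_eq_iff all_7 matrix_matrix_mult_def sum_7 vec_lambda_beta mat_def
  vector_add_component vector_minus_component vector_uminus_component vector_scaleR_component
  zero_index real_scaleR_def Aab_nth of_nat_numeral of_nat_1 numeral_7_eq_0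
  index_7_neq index_7_neq[THEN not_sym] insert_iff empty_iff simp_thms if_True if_False prod.case
  mult_zero_left mult_zero_right mult_1_left mult_1_right add_0_left add_0_right diff_0 diff_0_right
  minus_zero mult_minus_left mult_minus_right minus_minus

definition coord_proj :: "7 set \<Rightarrow> mat7" where
  "coord_proj S = (\<chi> i j. if i = j \<and> i \<in> S then 1 else 0)"

lemma mat_1_eq_coord_proj: "mat 1 = coord_proj {1, 2, 3} + coord_proj {4, 5, 6, 7}"
  by (simp only: coord_proj_def mat7_entry_simps)

section \<open>Matrix products and the matrix exponential\<close>

lemma matrix_add_rdistrib: "(A + B) ** C = A ** C + B ** C"
  for A B :: "'a::semiring_1^'n^'m" and C :: "'a^'p^'n"
  by (simp add: matrix_matrix_mult_def vec_eq_iff sum.distrib algebra_simps)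

lemma matrix_uminus_left: "(- A) ** B = - (A ** B)"
  and matrix_uminus_right: "A ** (- B) = - (A ** B)"
  for A :: "'a::ring_1^'n^'m" and B :: "'a^'p^'n"
  by (simp_all add: matrix_matrix_mult_def vec_eq_iff sum_negf)

lemma matrix_inv_unique:
  fixes A B :: "'a::semiring_1^'n^'n"
  assumes "A ** B = mat 1" "B ** A = mat 1"
  shows "matrix_inv A = B"
proof -
  have inv: "A ** matrix_inv A = mat 1 \<and> matrix_inv A ** A = mat 1"
    unfolding matrix_inv_def by (rule someI[of _ B]) (use assms in simp)
  have "matrix_inv A = matrix_inv A ** (A ** B)"
    using assms by simp
  also have "\<dots> = B"
    using inv by (simp add: matrix_mul_assoc)
  finally show ?thesis .
qed

lemma bounded_bilinear_matrix_mult: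
  "bounded_bilinear ((**) :: real^'n^'m \<Rightarrow> real^'p^'n \<Rightarrow> real^'p^'m)"
proof -
  have "linear (\<lambda>B. A ** B)" "linear (\<lambda>A. A ** B)"
    for A :: "real^'n^'m" and B :: "real^'p^'n"
    by (auto intro!: linearI simp: matrix_add_ldistrib matrix_add_rdistrib
        matrix_scalar_ac scalar_matrix_assoc[symmetric])
  then show ?thesis
    unfolding bilinear_conv_bounded_bilinear[symmetric] bilinear_def by blast
qed

lemma mpow_scaleR: "mpow (t *\<^sub>R N) n = t ^ n *\<^sub>R mpow N n"
  by (induction n) (simp_all add: matrix_scalar_ac scalar_matrix_assoc[symmetric])

lemma mpow_odd_even:
  assumes "N ** (N ** N) = - N"
  shows "mpow N (2 * k + 1) = (-1) ^ k *\<^sub>R N \<and> mpow N (2 * k + 2) = (-1) ^ k *\<^sub>R (N ** N)"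
proof (induction k)
  case 0
  then show ?case by simp
next
  case (Suc k)
  then have IH: "mpow N (2 * k + 1) = (-1) ^ k *\<^sub>R N" "mpow N (2 * k + 2) = (-1) ^ k *\<^sub>R (N ** N)"
    by auto
  have "mpow N (2 * Suc k + 1) = N ** (N ** mpow N (2 * k + 1))"
    by (simp add: numeral_eq_Suc)
  also have "\<dots> = (-1) ^ k *\<^sub>R (N ** (N ** N))"
    unfolding IH by (simp add: matrix_scalar_ac scalar_matrix_assoc[symmetric])
  finally have "mpow N (2 * Suc k + 1) = (-1) ^ Suc k *\<^sub>R N"
    using assms by simp
  moreover have "mpow N (2 * Suc k + 2) = N ** (N ** mpow N (2 * k + 2))"
    by (simp add: numeral_eq_Suc)
  moreover have "\<dots> = (-1) ^ k *\<^sub>R (N ** (N ** N) ** N)"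
    unfolding IH by (simp add: matrix_scalar_ac scalar_matrix_assoc[symmetric] matrix_mul_assoc)
  ultimately show ?case
    using assms by (simp add: matrix_uminus_left)
qed

lemma mexp_series_term:
  assumes "N ** (N ** N) = - N"
  shows "(1 / fact n) *\<^sub>R mpow (t *\<^sub>R N) n =
     (if n = 0 then mat 1 else 0) + (sin_coeff n * t ^ n) *\<^sub>R N
     + ((if n = 0 then 1 else 0) - cos_coeff n * t ^ n) *\<^sub>R (N ** N)"
proof (cases "n = 0")
  case True
  then show ?thesis by (simp add: cos_coeff_def)
next
  case False
  show ?thesis
  proof (cases "even n")
    case True
    define k where "k = n div 2 - 1"
    with True \<open>n \<noteq> 0\<close> have k: "n = 2 * k + 2"
      by auto
    have "mpow (t *\<^sub>R N) n = t ^ n *\<^sub>R ((-1) ^ k *\<^sub>R (N ** N))"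
      by (simp only: mpow_scaleR k conjunct2[OF mpow_odd_even[OF assms]])
    moreover have "even n" "n div 2 = Suc k"
      using k by auto
    ultimately show ?thesis
      using \<open>n \<noteq> 0\<close> by (simp add: sin_coeff_def cos_coeff_def)
  next
    case False
    then obtain k where k: "n = 2 * k + 1"
      using oddE by blast
    have "mpow (t *\<^sub>R N) n = t ^ n *\<^sub>R ((-1) ^ k *\<^sub>R N)"
      by (simp only: mpow_scaleR k conjunct1[OF mpow_odd_even[OF assms]])
    moreover have "odd n" "(n - 1) div 2 = k"
      using k by auto
    ultimately show ?thesis
      using \<open>n \<noteq> 0\<close> by (simp add: sin_coeff_def cos_coeff_def)
  qed
qed

lemma mexp_series_Rodrigues:
  assumes "N ** (N ** N) = - N"
  shows "(\<lambda>n. (1 / fact n) *\<^sub>R mpow (t *\<^sub>R N) n) sums (mat 1 + sin t *\<^sub>R N + (1 - cos t) *\<^sub>R (N ** N))"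
proof -
  have "(\<lambda>n. if n = 0 then mat 1 else (0::mat7)) sums mat 1"
    using sums_single[of 0 "\<lambda>_. mat 1 :: mat7"] by simp
  moreover have "(\<lambda>n. (sin_coeff n * t ^ n) *\<^sub>R N) sums (sin t *\<^sub>R N)"
    using sums_scaleR_left[OF sin_converges[of t], of N] by simp
  moreover have "(\<lambda>n. (if n = 0 then 1 else 0) - cos_coeff n * t ^ n) sums (1 - cos t)"
    using sums_diff[OF sums_single[of 0 "\<lambda>_. 1::real"] cos_converges[of t]] by simp
  then have "(\<lambda>n. ((if n = 0 then 1 else 0) - cos_coeff n * t ^ n) *\<^sub>R (N ** N)) sums ((1 - cos t) *\<^sub>R (N ** N))"
    by (rule sums_scaleR_left)
  ultimately show ?thesis
    unfolding mexp_series_term[OF assms] by (intro sums_add)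
qed

lemma mexp_Rodrigues:
  assumes "N ** (N ** N) = - N"
  shows "mexp (t *\<^sub>R N) = mat 1 + sin t *\<^sub>R N + (1 - cos t) *\<^sub>R (N ** N)"
  unfolding mexp_def using sums_unique[OF mexp_series_Rodrigues[OF assms]] by simp

lemma mpow_add_annihilating:
  assumes "X ** Y = 0" "Y ** X = 0"
  shows "mpow (X + Y) (Suc n) = mpow X (Suc n) + mpow Y (Suc n)"
proof (induction n)
  case 0
  then show ?case by simp
next
  case (Suc n)
  have "X ** (Y ** mpow Y n) = 0" "Y ** (X ** mpow X n) = 0"
    using assms by (simp_all add: matrix_mul_assoc)
  with Suc show ?case
    by (simp add: matrix_add_ldistrib matrix_add_rdistrib)
qed

lemma mexp_add_annihilating:
  assumes "X ** Y = 0" "Y ** X = 0"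
    and "summable (\<lambda>n. (1 / fact n) *\<^sub>R mpow X n)" "summable (\<lambda>n. (1 / fact n) *\<^sub>R mpow Y n)"
  shows "mexp (X + Y) = mexp X + mexp Y - mat 1"
proof -
  have "(1 / fact n) *\<^sub>R mpow (X + Y) n =
      (1 / fact n) *\<^sub>R mpow X n + (1 / fact n) *\<^sub>R mpow Y n - (if n = 0 then mat 1 else 0)" for n
    by (cases n) (simp, simp only: mpow_add_annihilating[OF assms(1,2)] scaleR_add_right, simp)
  moreover have "(\<lambda>n. if n = 0 then mat 1 else (0::mat7)) sums mat 1"
    using sums_single[of 0 "\<lambda>_. mat 1 :: mat7"] by simp
  ultimately show ?thesis
    unfolding mexp_def
    using sums_unique[OF sums_diff[OF sums_add[OF summable_sums[OF assms(3)] summable_sums[OF assms(4)]]]]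
    by simp
qed

lemma inj_derivative_if_linear_left_inverse:
  assumes f: "(f has_derivative D) (at x)" and R: "bounded_linear R" and "\<And>y. R (f y) = g y"
    and g: "(g has_derivative D') (at x)" and "inj D'"
  shows "inj D"
proof -
  have "(g has_derivative (\<lambda>h. R (D h))) (at x)"
    using bounded_linear.has_derivative[OF R f] \<open>\<And>y. R (f y) = g y\<close> by simp
  then have "(\<lambda>h. R (D h)) = D'"
    using g by (rule has_derivative_unique)
  with \<open>inj D'\<close> show ?thesis
    by (metis injD injI)
qed

lemma map_prod_has_derivative:
  assumes "(f has_derivative f') (at (fst z))" "(g has_derivative g') (at (snd z))"
  shows "(map_prod f g has_derivative map_prod f' g') (at z)"
proof -
  have "((\<lambda>z. (f (fst z), g (snd z))) has_derivative (\<lambda>h. (f' (fst h), g' (snd h)))) (at z)"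
    by (intro has_derivative_Pair has_derivative_compose[OF has_derivative_fst[OF has_derivative_ident] assms(1)]
        has_derivative_compose[OF has_derivative_snd[OF has_derivative_ident] assms(2)])
  then show ?thesis
    by (simp add: map_prod_def case_prod_beta')
qed

lemma homeomorphism_on_singleton_fibres:
  fixes f :: "'a::metric_space \<Rightarrow> 'b::metric_space"
  assumes K: "compact K" and f: "continuous_on K f" and U: "open U" "U \<subseteq> K"
    and fibre: "\<And>x u. x \<in> K \<Longrightarrow> u \<in> U \<Longrightarrow> f x = f u \<Longrightarrow> x = u"
  shows "openin (top_of_set (f ` K)) (f ` U)" "\<exists>g. homeomorphism U (f ` U) f g"
proof -
  have image_Int: "f ` (U \<inter> T) = f ` U \<inter> f ` (K \<inter> T)" for T
  proof
    show "f ` U \<inter> f ` (K \<inter> T) \<subseteq> f ` (U \<inter> T)"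
      using fibre by (fastforce simp: image_iff)
  qed (use U(2) in auto)
  have closed_image: "closed (f ` (K \<inter> T))" if "closed T" for T
  proof -
    have "compact (K \<inter> T)"
      using K that by (rule compact_Int_closed)
    then show ?thesis
      by (intro compact_imp_closed compact_continuous_image[OF continuous_on_subset[OF f Int_lower1]])
  qed
  have "f ` U = f ` K - f ` (K \<inter> - U)"
    using U(2) fibre by (fastforce simp: image_iff)
  moreover have "closedin (top_of_set (f ` K)) (f ` (K \<inter> - U))"
    using U(1) by (intro closed_subset closed_image) auto
  ultimately show "openin (top_of_set (f ` K)) (f ` U)"
    by auto
  have "inj_on f U"
  proof (rule inj_onI)
    fix x y assume "x \<in> U" "y \<in> U" "f x = f y"
    then show "x = y"
      using U(2) by (intro fibre) auto
  qed
  moreover have "closedin (top_of_set (f ` U)) (f ` C)" if "closedin (top_of_set U) C" for C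
  proof -
    from that obtain T where T: "closed T" "C = U \<inter> T"
      by (auto simp: closedin_closed)
    then show ?thesis
      unfolding T(2) image_Int by (simp add: closedin_closed_Int closed_image)
  qed
  ultimately show "\<exists>g. homeomorphism U (f ` U) f g"
    using homeomorphism_injective_closed_map[OF continuous_on_subset[OF f U(2)] refl] by metis
qed

lemma box_Pair_eq: "box (a, c) (b, d) = box a b \<times> box c d"
  by (force simp: box_def Basis_prod_def)

lemma polar_coordinates:
  obtains \<alpha> where "a = sqrt (a\<^sup>2 + b\<^sup>2) * cos \<alpha>" "b = sqrt (a\<^sup>2 + b\<^sup>2) * sin \<alpha>"
proof -
  have "rcis (cmod (Complex a b)) (Arg (Complex a b)) = Complex a b"
    by (rule rcis_cmod_Arg)
  then show thesis
    by (metis that complex.sel Re_rcis Im_rcis complex_norm)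
qed

lemma shift_into_period:
  assumes "0 < c"
  obtains k :: int where "0 \<le> x + of_int k * c" "x + of_int k * c < (c :: real)"
proof
  have "0 \<le> x / c - of_int \<lfloor>x / c\<rfloor>" "x / c - of_int \<lfloor>x / c\<rfloor> < 1"
    by linarith+
  then show "0 \<le> x + of_int (- \<lfloor>x / c\<rfloor>) * c" "x + of_int (- \<lfloor>x / c\<rfloor>) * c < c"
    using assms by (simp_all add: field_simps)
qed

lemma int_eq_0_if_abs_mult_less:
  assumes "\<bar>of_int k * c\<bar> < (c :: real)"
  shows "k = 0"
proof -
  have "0 < c"
    using assms by (meson abs_ge_zero le_less_trans)
  then have "\<bar>of_int k\<bar> * c < 1 * c"
    using assms by (simp add: abs_mult)
  with \<open>0 < c\<close> have "\<bar>of_int k :: real\<bar> < 1"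
    by (meson mult_less_cancel_right_pos)
  then show "k = 0"
    by linarith
qed

lemma sum_squares_rotation:
  fixes A B t :: real
  shows "(A * cos t - B * sin t)\<^sup>2 + (A * sin t + B * cos t)\<^sup>2 = A\<^sup>2 + B\<^sup>2"
proof -
  have "(A * cos t - B * sin t)\<^sup>2 + (A * sin t + B * cos t)\<^sup>2 = (A\<^sup>2 + B\<^sup>2) * ((sin t)\<^sup>2 + (cos t)\<^sup>2)"
    by algebra
  then show ?thesis
    by simp
qed

lemma span_3_scaled_unit:
  assumes "M \<in> span {A, B, C}"
  obtains t x y z where "x\<^sup>2 + y\<^sup>2 + z\<^sup>2 = 1" "M = t *\<^sub>R (x *\<^sub>R A + y *\<^sub>R B + z *\<^sub>R C)"
proof -
  obtain a b c where M: "M = a *\<^sub>R A + b *\<^sub>R B + c *\<^sub>R C"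
    using assms by (auto simp: span_insert span_empty algebra_simps)
  show thesis
  proof (cases "a\<^sup>2 + b\<^sup>2 + c\<^sup>2 = 0")
    case True
    then have "a\<^sup>2 = 0" "b\<^sup>2 = 0" "c\<^sup>2 = 0"
      using zero_le_power2[of a] zero_le_power2[of b] zero_le_power2[of c] by linarith+
    then have "M = 0 *\<^sub>R (1 *\<^sub>R A + 0 *\<^sub>R B + 0 *\<^sub>R C)"
      unfolding M by simp
    then show thesis
      by (rule that[rotated]) simp
  next
    case False
    define r where "r = sqrt (a\<^sup>2 + b\<^sup>2 + c\<^sup>2)"
    have "0 < a\<^sup>2 + b\<^sup>2 + c\<^sup>2"
      using False zero_le_power2[of a] zero_le_power2[of b] zero_le_power2[of c] by linarith
    then have "0 < r" "r\<^sup>2 = a\<^sup>2 + b\<^sup>2 + c\<^sup>2"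
      unfolding r_def by simp_all
    then have "(a / r)\<^sup>2 + (b / r)\<^sup>2 + (c / r)\<^sup>2 = 1"
      "M = r *\<^sub>R ((a / r) *\<^sub>R A + (b / r) *\<^sub>R B + (c / r) *\<^sub>R C)"
      using False unfolding M by (simp_all add: power_divide add_divide_distrib[symmetric] scaleR_add_right)
    then show thesis
      by (rule that)
  qed
qed

section \<open>Quaternions and Hopf coordinates\<close>

type_synonym quat = "real \<times> real \<times> real \<times> real"

definition qmult :: "quat \<Rightarrow> quat \<Rightarrow> quat" where
  "qmult = (\<lambda>(a0, a1, a2, a3) (b0, b1, b2, b3).
     (a0 * b0 - a1 * b1 - a2 * b2 - a3 * b3, a0 * b1 + a1 * b0 + a2 * b3 - a3 * b2,
      a0 * b2 - a1 * b3 + a2 * b0 + a3 * b1, a0 * b3 + a1 * b2 - a2 * b1 + a3 * b0))"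

definition qconj :: "quat \<Rightarrow> quat" where
  "qconj = (\<lambda>(a, b, c, d). (a, - b, - c, - d))"

definition qnorm2 :: "quat \<Rightarrow> real" where
  "qnorm2 = (\<lambda>(a, b, c, d). a\<^sup>2 + b\<^sup>2 + c\<^sup>2 + d\<^sup>2)"

definition unit_quats :: "quat set" where
  "unit_quats = {q. qnorm2 q = 1}"

lemma qnorm2_qmult: "qnorm2 (qmult p q) = qnorm2 p * qnorm2 q"
  by (cases p; cases q) (simp add: qnorm2_def qmult_def power2_eq_square algebra_simps)

lemma qmult_qconj: "qmult p (qconj p) = (qnorm2 p, 0, 0, 0)"
  and qmult_qconj_left: "qmult (qconj p) p = (qnorm2 p, 0, 0, 0)"
  by (cases p; simp add: qnorm2_def qmult_def qconj_def power2_eq_square algebra_simps)+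

lemma one_in_unit_quats: "(1, 0, 0, 0) \<in> unit_quats"
  by (simp add: unit_quats_def qnorm2_def)

lemma qmult_in_unit_quats: "p \<in> unit_quats \<Longrightarrow> q \<in> unit_quats \<Longrightarrow> qmult p q \<in> unit_quats"
  by (simp add: unit_quats_def qnorm2_qmult)

lemma qconj_in_unit_quats: "p \<in> unit_quats \<Longrightarrow> qconj p \<in> unit_quats"
  by (cases p) (simp add: unit_quats_def qnorm2_def qconj_def)

lemma unit_direction_in_unit_quats:
  assumes "x\<^sup>2 + y\<^sup>2 + z\<^sup>2 = 1"
  shows "(cos t, sin t * x, sin t * y, sin t * z) \<in> unit_quats"
proof -
  have "(cos t)\<^sup>2 + (sin t * x)\<^sup>2 + (sin t * y)\<^sup>2 + (sin t * z)\<^sup>2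
      = (cos t)\<^sup>2 + (sin t)\<^sup>2 * (x\<^sup>2 + y\<^sup>2 + z\<^sup>2)"
    by (simp add: power_mult_distrib algebra_simps)
  with assms show ?thesis
    by (simp add: unit_quats_def qnorm2_def)
qed

text \<open>Hopf coordinates on the unit sphere: \<open>euler_quat (p, s, w) = e^(i p) e^(j s) e^(i w)\<close>
  (lemma \<open>qmult_euler_factors\<close>).\<close>

definition euler_quat :: "real \<times> real \<times> real \<Rightarrow> quat" where
  "euler_quat = (\<lambda>(p, s, w).
     (cos s * cos (p + w), cos s * sin (p + w), sin s * cos (p - w), sin s * sin (p - w)))"

lemma qmult_euler_factors:
  "qmult (qmult (cos p, sin p, 0, 0) (cos s, 0, sin s, 0)) (cos w, sin w, 0, 0) = euler_quat (p, s, w)"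
  by (simp add: qmult_def euler_quat_def cos_add sin_add cos_diff sin_diff algebra_simps)

lemma euler_quat_in_unit_quats: "euler_quat x \<in> unit_quats"
proof -
  have "(c * x)\<^sup>2 + (c * y)\<^sup>2 + (d * u)\<^sup>2 + (d * v)\<^sup>2 = c\<^sup>2 * (x\<^sup>2 + y\<^sup>2) + d\<^sup>2 * (u\<^sup>2 + v\<^sup>2)"
    for c d x y u v :: real
    by (simp add: power2_eq_square algebra_simps)
  then show ?thesis
    by (simp add: unit_quats_def qnorm2_def euler_quat_def split: prod.split)
qed

definition euler_box :: "(real \<times> real \<times> real) set" where
  "euler_box = {0..pi} \<times> {0..pi / 2} \<times> {0..2 * pi}"

definition open_euler_box :: "(real \<times> real \<times> real) set" where
  "open_euler_box = {0<..<pi} \<times> {0<..<pi / 2} \<times> {0<..<2 * pi}"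

text \<open>Only \<open>p + w\<close> and \<open>p - w\<close> modulo \<open>2 * pi\<close> matter, so \<open>(p, w)\<close> may be shifted by
  \<open>(pi, pi)\<close> and by \<open>(0, 2 * pi)\<close>.\<close>

lemma euler_angles_exist:
  obtains p w where "0 \<le> p" "p \<le> pi" "0 \<le> w" "w \<le> 2 * pi"
    "cos (p + w) = cos \<alpha>" "sin (p + w) = sin \<alpha>" "cos (p - w) = cos \<beta>" "sin (p - w) = sin \<beta>"
proof -
  obtain m :: int where m: "0 \<le> (\<alpha> + \<beta>) / 2 + of_int m * pi" "(\<alpha> + \<beta>) / 2 + of_int m * pi < pi"
    using shift_into_period pi_gt_zero by blast
  obtain n :: int where n: "0 \<le> (\<alpha> - \<beta>) / 2 + of_int m * pi + of_int n * (2 * pi)"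
    "(\<alpha> - \<beta>) / 2 + of_int m * pi + of_int n * (2 * pi) < 2 * pi"
    using shift_into_period[of "2 * pi"] pi_gt_zero by auto
  define p where "p = (\<alpha> + \<beta>) / 2 + of_int m * pi"
  define w where "w = (\<alpha> - \<beta>) / 2 + of_int m * pi + of_int n * (2 * pi)"
  have "p + w = \<alpha> + 2 * pi * of_int (m + n)" "p - w = \<beta> + 2 * pi * of_int (- n)"
    unfolding p_def w_def by (simp_all add: field_simps)
  then have "sin (p + w) = sin \<alpha> \<and> cos (p + w) = cos \<alpha>" "sin (p - w) = sin \<beta> \<and> cos (p - w) = cos \<beta>"
    using sin_cos_eq_iff by blast+
  with m n show thesis
    by (intro that[of p w]) (simp_all flip: p_def w_def)
qed

lemma unit_quats_subset_euler_image: "unit_quats \<subseteq> euler_quat ` euler_box"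
proof
  fix q assume "q \<in> unit_quats"
  obtain a b c d where q: "q = (a, b, c, d)"
    by (cases q) auto
  define r1 where "r1 = sqrt (a\<^sup>2 + b\<^sup>2)"
  define r2 where "r2 = sqrt (c\<^sup>2 + d\<^sup>2)"
  have "r1\<^sup>2 + r2\<^sup>2 = 1" "0 \<le> r1" "0 \<le> r2"
    using \<open>q \<in> unit_quats\<close> unfolding q r1_def r2_def unit_quats_def qnorm2_def by simp_all
  then obtain s where s: "0 \<le> s" "s \<le> pi / 2" "r1 = cos s" "r2 = sin s"
    using sincos_total_pi_half by blast
  obtain \<alpha> where \<alpha>: "a = r1 * cos \<alpha>" "b = r1 * sin \<alpha>"
    unfolding r1_def by (rule polar_coordinates)
  obtain \<beta> where \<beta>: "c = r2 * cos \<beta>" "d = r2 * sin \<beta>"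
    unfolding r2_def by (rule polar_coordinates)
  obtain p w where pw: "0 \<le> p" "p \<le> pi" "0 \<le> w" "w \<le> 2 * pi"
    "cos (p + w) = cos \<alpha>" "sin (p + w) = sin \<alpha>" "cos (p - w) = cos \<beta>" "sin (p - w) = sin \<beta>"
    by (rule euler_angles_exist)
  have "(p, s, w) \<in> euler_box"
    unfolding euler_box_def using pw s by auto
  moreover have "euler_quat (p, s, w) = q"
    unfolding euler_quat_def q using \<alpha> \<beta> s pw by simp
  ultimately show "q \<in> euler_quat ` euler_box"
    by blast
qed

lemma euler_quat_eq_imp_eq:
  assumes x: "x \<in> euler_box" and u: "u \<in> open_euler_box" and eq: "euler_quat x = euler_quat u"
  shows "x = u"
proof -
  obtain p s w where xd: "x = (p, s, w)"
    by (cases x) auto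
  obtain p' s' w' where ud: "u = (p', s', w')"
    by (cases u) auto
  have xb: "0 \<le> p" "p \<le> pi" "0 \<le> s" "s \<le> pi / 2" "0 \<le> w" "w \<le> 2 * pi"
    using x unfolding xd euler_box_def by auto
  have ub: "0 < p'" "p' < pi" "0 < s'" "s' < pi / 2" "0 < w'" "w' < 2 * pi"
    using u unfolding ud open_euler_box_def by auto
  have e: "cos s * cos (p + w) = cos s' * cos (p' + w')" "cos s * sin (p + w) = cos s' * sin (p' + w')"
    "sin s * cos (p - w) = sin s' * cos (p' - w')" "sin s * sin (p - w) = sin s' * sin (p' - w')"
    using eq unfolding xd ud euler_quat_def by simp_all
  have "(cos s)\<^sup>2 = (cos s * cos (p + w))\<^sup>2 + (cos s * sin (p + w))\<^sup>2"
    by (simp add: power_mult_distrib distrib_left[symmetric])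
  also have "\<dots> = (cos s')\<^sup>2"
    unfolding e by (simp add: power_mult_distrib distrib_left[symmetric])
  finally have "(cos s)\<^sup>2 = (cos s')\<^sup>2" .
  moreover have "0 \<le> cos s" "0 \<le> cos s'"
    using xb ub by (auto intro!: cos_ge_zero)
  ultimately have "cos s = cos s'"
    by (rule power2_eq_imp_eq)
  then have ss: "s = s'"
    by (rule cos_inj_pi[rotated 4]) (use xb ub in linarith)+
  have "cos s' > 0" "sin s' > 0"
    using ub by (auto intro: cos_gt_zero sin_gt_zero)
  then have "sin (p + w) = sin (p' + w') \<and> cos (p + w) = cos (p' + w')"
    "sin (p - w) = sin (p' - w') \<and> cos (p - w) = cos (p' - w')"
    using e unfolding ss by simp_all
  then obtain k1 k2 :: int where k: "p + w = p' + w' + 2 * pi * k1" "p - w = p' - w' + 2 * pi * k2"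
    unfolding sin_cos_eq_iff by blast
  have "of_int (k1 + k2) * pi = p - p'"
    using k by (simp add: algebra_simps)
  then have "\<bar>of_int (k1 + k2) * pi\<bar> < pi"
    using xb ub by simp
  then have k2: "k2 = - k1"
    using int_eq_0_if_abs_mult_less by fastforce
  have pp: "p = p'"
    using k unfolding k2 of_int_minus mult_minus_right by linarith
  have "of_int k1 * (2 * pi) = w - w'"
    using k pp by (simp add: algebra_simps)
  then have "\<bar>of_int k1 * (2 * pi)\<bar> < 2 * pi"
    using xb ub by simp
  then have "w = w'"
    using k pp by (simp add: int_eq_0_if_abs_mult_less)
  with pp ss show ?thesis
    unfolding xd ud by simp
qed

definition euler_quat_deriv :: "real \<times> real \<times> real \<Rightarrow> real \<times> real \<times> real \<Rightarrow> quat" where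
  "euler_quat_deriv = (\<lambda>(p, s, w) (dp, ds, dw).
     (- sin s * ds * cos (p + w) - cos s * (dp + dw) * sin (p + w),
      - sin s * ds * sin (p + w) + cos s * (dp + dw) * cos (p + w),
      cos s * ds * cos (p - w) - sin s * (dp - dw) * sin (p - w),
      cos s * ds * sin (p - w) + sin s * (dp - dw) * cos (p - w)))"

lemma euler_quat_has_derivative: "(euler_quat has_derivative euler_quat_deriv x) (at x)"
proof -
  have eq: "euler_quat = (\<lambda>x. (cos (fst (snd x)) * cos (fst x + snd (snd x)),
      cos (fst (snd x)) * sin (fst x + snd (snd x)), sin (fst (snd x)) * cos (fst x - snd (snd x)),
      sin (fst (snd x)) * sin (fst x - snd (snd x))))"
    by (auto simp: euler_quat_def)
  show ?thesis
    unfolding eq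
    apply (rule has_derivative_eq_rhs)
     apply (rule derivative_eq_intros refl | simp)+
    apply (simp add: euler_quat_deriv_def fun_eq_iff algebra_simps split: prod.split)
    done
qed

text \<open>The two halves of the differential are rotations of \<open>(- sin s * ds, cos s * (dp + dw))\<close>
  and \<open>(cos s * ds, sin s * (dp - dw))\<close>, so they vanish only if these vectors do.\<close>

lemma euler_quat_deriv_eq_0_iff:
  assumes "(p, s, w) \<in> open_euler_box"
  shows "euler_quat_deriv (p, s, w) h = 0 \<longleftrightarrow> h = 0"
proof
  assume h: "euler_quat_deriv (p, s, w) h = 0"
  obtain dp ds dw where hd: "h = (dp, ds, dw)"
    by (cases h) auto
  have "0 < sin s" "0 < cos s"
    using assms by (auto simp: open_euler_box_def intro: sin_gt_zero cos_gt_zero)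
  have "(- sin s * ds)\<^sup>2 + (cos s * (dp + dw))\<^sup>2 = 0"
    using h sum_squares_rotation[of "- sin s * ds" "p + w" "cos s * (dp + dw)"]
    by (simp add: hd euler_quat_deriv_def zero_prod_def algebra_simps)
  moreover have "(cos s * ds)\<^sup>2 + (sin s * (dp - dw))\<^sup>2 = 0"
    using h sum_squares_rotation[of "cos s * ds" "p - w" "sin s * (dp - dw)"]
    by (simp add: hd euler_quat_deriv_def zero_prod_def algebra_simps)
  ultimately have "ds = 0" "dp + dw = 0" "dp - dw = 0"
    using \<open>0 < sin s\<close> \<open>0 < cos s\<close> by (simp_all add: sum_power2_eq_zero_iff)
  then show "h = 0"
    by (simp add: hd zero_prod_def)
qed (simp add: euler_quat_deriv_def zero_prod_def)

lemma inj_euler_quat_deriv: "x \<in> open_euler_box \<Longrightarrow> inj (euler_quat_deriv x)"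
  using linear_injective_0[OF has_derivative_linear[OF euler_quat_has_derivative]]
    euler_quat_deriv_eq_0_iff by (cases x) auto

section \<open>The groups generated by the exponentials of \<open>k1\<close> and \<open>k2\<close>\<close>

lemma gen_group_subset_image:
  assumes one: "F (1, 0, 0, 0) = mat 1" and mult: "\<And>p q. F p ** F q = F (qmult p q)"
    and S: "S \<subseteq> F ` unit_quats"
  shows "gen_group S \<subseteq> F ` unit_quats"
proof
  fix g assume "g \<in> gen_group S"
  then show "g \<in> F ` unit_quats"
  proof (induction rule: gen_group.induct)
    case gen_one
    show ?case
      using one one_in_unit_quats by (metis image_eqI)
  next
    case (gen_mul s g)
    then obtain p q where "p \<in> unit_quats" "s = F p" "q \<in> unit_quats" "g = F q"
      using S by blast
    then show ?case
      by (simp add: mult qmult_in_unit_quats)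
  next
    case (gen_inv s g)
    then obtain p q where p: "p \<in> unit_quats" "s = F p" and q: "q \<in> unit_quats" "g = F q"
      using S by blast
    then have "matrix_inv s = F (qconj p)"
      by (intro matrix_inv_unique) (simp_all add: mult one qmult_qconj qmult_qconj_left unit_quats_def)
    then show ?case
      using p q by (simp add: mult qmult_in_unit_quats qconj_in_unit_quats)
  qed
qed

lemma gen_group_mult3: "a \<in> S \<Longrightarrow> b \<in> S \<Longrightarrow> c \<in> S \<Longrightarrow> a ** b ** c \<in> gen_group S"
  using gen_group.gen_mul[OF _ gen_group.gen_mul[OF _ gen_group.gen_mul[OF _ gen_group.gen_one]]]
  by (simp add: matrix_mul_assoc)

lemma gen_group_exp_eq_image:
  assumes "F (1, 0, 0, 0) = mat 1" "\<And>p q. F p ** F q = F (qmult p q)"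
    and "mexp ` k \<subseteq> F ` unit_quats" and "\<And>t. t *\<^sub>R X \<in> k" "\<And>t. t *\<^sub>R Y \<in> k"
    and euler: "\<And>p s w. F (euler_quat (p, s, w)) = mexp (p *\<^sub>R X) ** mexp (s *\<^sub>R Y) ** mexp (w *\<^sub>R X)"
  shows "gen_group (mexp ` k) = F ` unit_quats"
proof
  show "gen_group (mexp ` k) \<subseteq> F ` unit_quats"
    using assms(1-3) by (rule gen_group_subset_image)
  show "F ` unit_quats \<subseteq> gen_group (mexp ` k)"
  proof
    fix g assume "g \<in> F ` unit_quats"
    then obtain x where x: "g = F (euler_quat x)"
      using unit_quats_subset_euler_image by blast
    obtain p s w where "x = (p, s, w)"
      by (cases x)
    with x show "g \<in> gen_group (mexp ` k)"
      using assms(4,5) by (auto simp: euler intro!: gen_group_mult3 imageI)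
  qed
qed

text \<open>The order \<open>lam3, lam2, -lam1\<close> of the imaginary units makes \<open>exp (t lam3)\<close> and
  \<open>exp (t lam2)\<close> the images of \<open>e^(i t)\<close> and \<open>e^(j t)\<close>, matching \<open>lam8, lam9\<close> in \<open>rep_k2\<close>.\<close>

definition k1_gen :: "real \<Rightarrow> real \<Rightarrow> real \<Rightarrow> mat7" where
  "k1_gen x y z = x *\<^sub>R lam3 + y *\<^sub>R lam2 - z *\<^sub>R lam1"

definition rep_k1 :: "quat \<Rightarrow> mat7" where
  "rep_k1 = (\<lambda>(a, b, c, d). coord_proj {1, 2, 3} + a *\<^sub>R coord_proj {4, 5, 6, 7} + k1_gen b c d)"

definition so3_gen :: "real \<Rightarrow> real \<Rightarrow> real \<Rightarrow> mat7" where
  "so3_gen x y z = - x *\<^sub>R Aab 2 3 - y *\<^sub>R Aab 1 2 - z *\<^sub>R Aab 1 3"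

definition spin_gen :: "real \<Rightarrow> real \<Rightarrow> real \<Rightarrow> mat7" where
  "spin_gen x y z = x *\<^sub>R (Aab 4 5 - Aab 6 7) + y *\<^sub>R (Aab 4 7 - Aab 5 6) - z *\<^sub>R (Aab 4 6 + Aab 5 7)"

text \<open>On the coordinates \<open>1, 2, 3\<close> this is the Euler--Rodrigues formula for the rotation
  \<open>v \<mapsto> q v q\<^sup>*\<close>, on the coordinates \<open>4, \<dots>, 7\<close> it is linear in \<open>q\<close>.\<close>

definition rep_k2 :: "quat \<Rightarrow> mat7" where
  "rep_k2 = (\<lambda>(a, b, c, d).
     (a\<^sup>2 + b\<^sup>2 + c\<^sup>2 + d\<^sup>2) *\<^sub>R coord_proj {1, 2, 3} + (2 * a) *\<^sub>R so3_gen b c d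
     + 2 *\<^sub>R (so3_gen b c d ** so3_gen b c d) + a *\<^sub>R coord_proj {4, 5, 6, 7} + spin_gen b c d)"

lemma rep_k1_one: "rep_k1 (1, 0, 0, 0) = mat 1"
  by (simp add: rep_k1_def k1_gen_def mat_1_eq_coord_proj)

lemma rep_k2_one: "rep_k2 (1, 0, 0, 0) = mat 1"
  by (simp add: rep_k2_def so3_gen_def spin_gen_def mat_1_eq_coord_proj)

lemma rep_k1_mult: "rep_k1 p ** rep_k1 q = rep_k1 (qmult p q)"
  by (cases p; cases q)
    (simp only: rep_k1_def qmult_def coord_proj_def k1_gen_def lam1_def lam2_def lam3_def mat7_entry_simps,
     simp_all add: algebra_simps)

lemma rep_k2_mult: "rep_k2 p ** rep_k2 q = rep_k2 (qmult p q)"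
  by (cases p; cases q)
    (simp only: rep_k2_def qmult_def coord_proj_def so3_gen_def spin_gen_def mat7_entry_simps,
     simp_all add: power2_eq_square algebra_simps)

definition read_k1 :: "mat7 \<Rightarrow> quat" where
  "read_k1 M = (M $ 4 $ 4, - M $ 4 $ 5, M $ 4 $ 6, M $ 4 $ 7)"

definition read_k2 :: "mat7 \<Rightarrow> quat" where
  "read_k2 M = (M $ 4 $ 4, M $ 4 $ 5, M $ 4 $ 7, - M $ 4 $ 6)"

lemma read_k1_rep_k1: "read_k1 (rep_k1 q) = q"
  by (cases q) (simp only: read_k1_def rep_k1_def coord_proj_def k1_gen_def lam1_def lam2_def lam3_def mat7_entry_simps)

lemma read_k2_rep_k2: "read_k2 (rep_k2 q) = q"
  by (cases q) (simp only: read_k2_def rep_k2_def coord_proj_def so3_gen_def spin_gen_def mat7_entry_simps)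

lemma bounded_linear_read_k1: "bounded_linear read_k1"
  and bounded_linear_read_k2: "bounded_linear read_k2"
  unfolding read_k1_def[abs_def] read_k2_def[abs_def]
  by (intro bounded_linear_Pair bounded_linear_minus
      bounded_linear_compose[OF bounded_linear_vec_nth bounded_linear_vec_nth])+

lemma rep_k1_has_derivative: "\<exists>D. (rep_k1 has_derivative D) (at q)"
proof -
  have eq: "rep_k1 = (\<lambda>q. coord_proj {1, 2, 3} + fst q *\<^sub>R coord_proj {4, 5, 6, 7}
      + k1_gen (fst (snd q)) (fst (snd (snd q))) (snd (snd (snd q))))"
    by (auto simp: rep_k1_def)
  show ?thesis
    unfolding eq k1_gen_def by (rule exI, (rule derivative_intros)+)
qed

lemma rep_k2_has_derivative: "\<exists>D. (rep_k2 has_derivative D) (at q)"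
proof -
  have eq: "rep_k2 = (\<lambda>q. ((fst q)\<^sup>2 + (fst (snd q))\<^sup>2 + (fst (snd (snd q)))\<^sup>2 + (snd (snd (snd q)))\<^sup>2)
        *\<^sub>R coord_proj {1, 2, 3}
      + (2 * fst q) *\<^sub>R so3_gen (fst (snd q)) (fst (snd (snd q))) (snd (snd (snd q)))
      + 2 *\<^sub>R (so3_gen (fst (snd q)) (fst (snd (snd q))) (snd (snd (snd q)))
          ** so3_gen (fst (snd q)) (fst (snd (snd q))) (snd (snd (snd q))))
      + fst q *\<^sub>R coord_proj {4, 5, 6, 7} + spin_gen (fst (snd q)) (fst (snd (snd q))) (snd (snd (snd q))))"
    by (auto simp: rep_k2_def)
  show ?thesis
    unfolding eq so3_gen_def spin_gen_def
    by (rule exI, (rule derivative_intros bounded_bilinear.FDERIV[OF bounded_bilinear_matrix_mult])+)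
qed

lemma k1_gen_scaleR: "k1_gen (c * x) (c * y) (c * z) = c *\<^sub>R k1_gen x y z"
  and so3_gen_scaleR: "so3_gen (c * x) (c * y) (c * z) = c *\<^sub>R so3_gen x y z"
  and spin_gen_scaleR: "spin_gen (c * x) (c * y) (c * z) = c *\<^sub>R spin_gen x y z"
  by (simp_all add: k1_gen_def so3_gen_def spin_gen_def algebra_simps)

lemma k2_gen_split: "x *\<^sub>R lam8 + y *\<^sub>R lam9 + z *\<^sub>R lam10 = 2 *\<^sub>R so3_gen x y z + spin_gen x y z"
  by (simp add: lam8_def lam9_def lam10_def so3_gen_def spin_gen_def algebra_simps)

lemma k1_gen_square: "k1_gen x y z ** k1_gen x y z = - (x\<^sup>2 + y\<^sup>2 + z\<^sup>2) *\<^sub>R coord_proj {4, 5, 6, 7}"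
  and spin_gen_square: "spin_gen x y z ** spin_gen x y z = - (x\<^sup>2 + y\<^sup>2 + z\<^sup>2) *\<^sub>R coord_proj {4, 5, 6, 7}"
  and so3_gen_cube: "so3_gen x y z ** (so3_gen x y z ** so3_gen x y z) = - (x\<^sup>2 + y\<^sup>2 + z\<^sup>2) *\<^sub>R so3_gen x y z"
  by (simp only: k1_gen_def spin_gen_def so3_gen_def coord_proj_def lam1_def lam2_def lam3_def mat7_entry_simps,
      simp_all add: power2_eq_square algebra_simps)+

lemma k1_gen_proj: "k1_gen x y z ** coord_proj {4, 5, 6, 7} = k1_gen x y z"
  and spin_gen_proj: "spin_gen x y z ** coord_proj {4, 5, 6, 7} = spin_gen x y z"
  and so3_gen_spin_gen: "so3_gen x y z ** spin_gen x y z = 0"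
  and spin_gen_so3_gen: "spin_gen x y z ** so3_gen x y z = 0"
  by (simp only: k1_gen_def spin_gen_def so3_gen_def coord_proj_def lam1_def lam2_def lam3_def mat7_entry_simps)+

lemma mexp_k1_gen:
  assumes "x\<^sup>2 + y\<^sup>2 + z\<^sup>2 = 1"
  shows "mexp (t *\<^sub>R k1_gen x y z) = rep_k1 (cos t, sin t * x, sin t * y, sin t * z)"
proof -
  let ?N = "k1_gen x y z" and ?P = "coord_proj {4, 5, 6, 7}"
  have sq: "?N ** ?N = - ?P"
    unfolding k1_gen_square assms by simp
  then have "?N ** (?N ** ?N) = - ?N"
    by (simp add: matrix_uminus_right k1_gen_proj)
  then have "mexp (t *\<^sub>R ?N) = mat 1 + sin t *\<^sub>R ?N + (1 - cos t) *\<^sub>R (?N ** ?N)"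
    by (rule mexp_Rodrigues)
  also have "\<dots> = rep_k1 (cos t, sin t * x, sin t * y, sin t * z)"
    unfolding sq rep_k1_def prod.case k1_gen_scaleR mat_1_eq_coord_proj by (simp add: algebra_simps)
  finally show ?thesis .
qed

lemma mexp_k2_gen:
  assumes "x\<^sup>2 + y\<^sup>2 + z\<^sup>2 = 1"
  shows "mexp (t *\<^sub>R (x *\<^sub>R lam8 + y *\<^sub>R lam9 + z *\<^sub>R lam10)) = rep_k2 (cos t, sin t * x, sin t * y, sin t * z)"
proof -
  let ?K = "so3_gen x y z" and ?S = "spin_gen x y z" and ?P = "coord_proj {4, 5, 6, 7}"
  have K: "?K ** (?K ** ?K) = - ?K"
    unfolding so3_gen_cube assms by simp
  have sq: "?S ** ?S = - ?P"
    unfolding spin_gen_square assms by simp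
  then have S: "?S ** (?S ** ?S) = - ?S"
    by (simp add: matrix_uminus_right spin_gen_proj)
  have norm: "(cos t)\<^sup>2 + (sin t * x)\<^sup>2 + (sin t * y)\<^sup>2 + (sin t * z)\<^sup>2 = 1"
    using unit_direction_in_unit_quats[OF assms, of t] by (simp add: unit_quats_def qnorm2_def)
  have double: "sin (2 * t) = 2 * cos t * sin t" "1 - cos (2 * t) = 2 * sin t * sin t"
    by (simp_all add: sin_double cos_double_sin power2_eq_square)
  have "t *\<^sub>R (x *\<^sub>R lam8 + y *\<^sub>R lam9 + z *\<^sub>R lam10) = (2 * t) *\<^sub>R ?K + t *\<^sub>R ?S"
    unfolding k2_gen_split by (simp add: algebra_simps)
  then have "mexp (t *\<^sub>R (x *\<^sub>R lam8 + y *\<^sub>R lam9 + z *\<^sub>R lam10))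
      = mexp ((2 * t) *\<^sub>R ?K) + mexp (t *\<^sub>R ?S) - mat 1"
    by (simp only:, intro mexp_add_annihilating)
      (simp_all add: matrix_scalar_ac scalar_matrix_assoc[symmetric] so3_gen_spin_gen spin_gen_so3_gen
        sums_summable[OF mexp_series_Rodrigues[OF K]] sums_summable[OF mexp_series_Rodrigues[OF S]])
  also have "\<dots> = rep_k2 (cos t, sin t * x, sin t * y, sin t * z)"
    unfolding mexp_Rodrigues[OF K] mexp_Rodrigues[OF S] sq double rep_k2_def prod.case norm
      so3_gen_scaleR spin_gen_scaleR mat_1_eq_coord_proj
    by (simp add: matrix_scalar_ac scalar_matrix_assoc[symmetric] algebra_simps)
  finally show ?thesis .
qed

lemma mexp_k1_subset: "mexp ` k1 \<subseteq> rep_k1 ` unit_quats"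
proof
  fix E assume "E \<in> mexp ` k1"
  then obtain M where "M \<in> span {lam3, lam2, lam1}" "E = mexp M"
    unfolding k1_def by (auto simp: insert_commute)
  then obtain t x y z where "x\<^sup>2 + y\<^sup>2 + (- z)\<^sup>2 = 1" "E = mexp (t *\<^sub>R k1_gen x y (- z))"
    by (elim span_3_scaled_unit) (simp add: k1_gen_def)
  then show "E \<in> rep_k1 ` unit_quats"
    using mexp_k1_gen unit_direction_in_unit_quats by blast
qed

lemma mexp_k2_subset: "mexp ` k2 \<subseteq> rep_k2 ` unit_quats"
proof
  fix E assume "E \<in> mexp ` k2"
  then obtain M where "M \<in> span {lam8, lam9, lam10}" "E = mexp M"
    unfolding k2_def by auto
  then obtain t x y z where "x\<^sup>2 + y\<^sup>2 + z\<^sup>2 = 1"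
    "E = mexp (t *\<^sub>R (x *\<^sub>R lam8 + y *\<^sub>R lam9 + z *\<^sub>R lam10))"
    by (elim span_3_scaled_unit) simp
  then show "E \<in> rep_k2 ` unit_quats"
    using mexp_k2_gen unit_direction_in_unit_quats by blast
qed

lemma rep_k1_euler_quat:
  "rep_k1 (euler_quat (p, s, w)) = mexp (p *\<^sub>R lam3) ** mexp (s *\<^sub>R lam2) ** mexp (w *\<^sub>R lam3)"
proof -
  have "mexp (t *\<^sub>R lam3) = rep_k1 (cos t, sin t, 0, 0)" "mexp (t *\<^sub>R lam2) = rep_k1 (cos t, 0, sin t, 0)" for t
    using mexp_k1_gen[of 1 0 0 t] mexp_k1_gen[of 0 1 0 t] by (simp_all add: k1_gen_def)
  then show ?thesis
    by (simp add: rep_k1_mult qmult_euler_factors)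
qed

lemma rep_k2_euler_quat:
  "rep_k2 (euler_quat (p, s, w)) = mexp (p *\<^sub>R lam8) ** mexp (s *\<^sub>R lam9) ** mexp (w *\<^sub>R lam8)"
proof -
  have "mexp (t *\<^sub>R lam8) = rep_k2 (cos t, sin t, 0, 0)" "mexp (t *\<^sub>R lam9) = rep_k2 (cos t, 0, sin t, 0)" for t
    using mexp_k2_gen[of 1 0 0 t] mexp_k2_gen[of 0 1 0 t] by simp_all
  then show ?thesis
    by (simp add: rep_k2_mult qmult_euler_factors)
qed

lemma gen_group_k1: "gen_group (mexp ` k1) = rep_k1 ` unit_quats"
  by (rule gen_group_exp_eq_image[OF rep_k1_one rep_k1_mult mexp_k1_subset _ _ rep_k1_euler_quat])
    (simp_all add: k1_def span_mul span_base)

lemma gen_group_k2: "gen_group (mexp ` k2) = rep_k2 ` unit_quats"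
  by (rule gen_group_exp_eq_image[OF rep_k2_one rep_k2_mult mexp_k2_subset _ _ rep_k2_euler_quat])
    (simp_all add: k2_def span_mul span_base)

lemma Khat_eq: "Khat = rep_k1 ` unit_quats \<times> rep_k2 ` unit_quats"
  by (simp add: Khat_def gen_group_k1 gen_group_k2)

section \<open>The Euler-angle parametrisation\<close>

type_synonym euler_params = "real \<times> real \<times> real \<times> real \<times> real \<times> real"

definition euler_quats :: "euler_params \<Rightarrow> quat \<times> quat" where
  "euler_quats = (\<lambda>(p1, s1, w1, p2, s2, w2). (euler_quat (p1, s1, w1), euler_quat (p2, s2, w2)))"

definition open_param_box :: "euler_params set" where
  "open_param_box =
     {0<..<pi} \<times> {0<..<pi / 2} \<times> {0<..<2 * pi} \<times> {0<..<pi} \<times> {0<..<pi / 2} \<times> {0<..<2 * pi}"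

lemma param_box_iff:
  "(p1, s1, w1, p2, s2, w2) \<in> param_box \<longleftrightarrow> (p1, s1, w1) \<in> euler_box \<and> (p2, s2, w2) \<in> euler_box"
  by (auto simp: param_box_def euler_box_def)

lemma open_param_box_iff:
  "(p1, s1, w1, p2, s2, w2) \<in> open_param_box \<longleftrightarrow>
     (p1, s1, w1) \<in> open_euler_box \<and> (p2, s2, w2) \<in> open_euler_box"
  by (auto simp: open_param_box_def open_euler_box_def)

lemma euler_quats_image: "euler_quats ` param_box = unit_quats \<times> unit_quats"
proof
  show "euler_quats ` param_box \<subseteq> unit_quats \<times> unit_quats"
  proof (rule image_subsetI)
    fix x
    show "euler_quats x \<in> unit_quats \<times> unit_quats"
      by (cases x) (simp add: euler_quats_def euler_quat_in_unit_quats)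
  qed
  show "unit_quats \<times> unit_quats \<subseteq> euler_quats ` param_box"
  proof safe
    fix q1 q2 assume "q1 \<in> unit_quats" "q2 \<in> unit_quats"
    then obtain x1 x2 where x: "x1 \<in> euler_box" "q1 = euler_quat x1" "x2 \<in> euler_box" "q2 = euler_quat x2"
      using unit_quats_subset_euler_image by blast
    obtain p1 s1 w1 p2 s2 w2 where "x1 = (p1, s1, w1)" "x2 = (p2, s2, w2)"
      by (cases x1, cases x2)
    with x show "(q1, q2) \<in> euler_quats ` param_box"
      by (intro image_eqI[of _ _ "(p1, s1, w1, p2, s2, w2)"]) (simp_all add: euler_quats_def param_box_iff)
  qed
qed

lemma euler_quats_eq_imp_eq:
  assumes "x \<in> param_box" "u \<in> open_param_box" "euler_quats x = euler_quats u"
  shows "x = u"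
  using assms euler_quat_eq_imp_eq
  by (cases x; cases u) (auto simp: euler_quats_def param_box_iff open_param_box_iff)

definition euler_quats_deriv :: "euler_params \<Rightarrow> euler_params \<Rightarrow> quat \<times> quat" where
  "euler_quats_deriv = (\<lambda>(p1, s1, w1, p2, s2, w2) (h1, h2, h3, h4, h5, h6).
    (euler_quat_deriv (p1, s1, w1) (h1, h2, h3), euler_quat_deriv (p2, s2, w2) (h4, h5, h6)))"

lemma euler_quats_has_derivative: "(euler_quats has_derivative euler_quats_deriv x) (at x)"
proof -
  have eq: "euler_quats = (\<lambda>x. (euler_quat (fst x, fst (snd x), fst (snd (snd x))), euler_quat (snd (snd (snd x)))))"
    by (auto simp: euler_quats_def)
  have "((\<lambda>x. (fst x, fst (snd x), fst (snd (snd x)))) has_derivative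
      (\<lambda>h. (fst h, fst (snd h), fst (snd (snd h))))) (at x)"
    "((\<lambda>x. snd (snd (snd x))) has_derivative (\<lambda>h. snd (snd (snd h)))) (at x)"
    by (rule derivative_intros)+
  then have "(euler_quats has_derivative (\<lambda>h.
      (euler_quat_deriv (fst x, fst (snd x), fst (snd (snd x))) (fst h, fst (snd h), fst (snd (snd h))),
       euler_quat_deriv (snd (snd (snd x))) (snd (snd (snd h)))))) (at x)"
    unfolding eq
    by (rule has_derivative_Pair[OF has_derivative_compose[OF _ euler_quat_has_derivative]
          has_derivative_compose[OF _ euler_quat_has_derivative]])
  moreover have "(\<lambda>h. (euler_quat_deriv (fst x, fst (snd x), fst (snd (snd x))) (fst h, fst (snd h), fst (snd (snd h))),
       euler_quat_deriv (snd (snd (snd x))) (snd (snd (snd h))))) = euler_quats_deriv x"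
    by (auto simp: euler_quats_deriv_def split: prod.split)
  ultimately show ?thesis
    by simp
qed

lemma inj_euler_quats_deriv: "x \<in> open_param_box \<Longrightarrow> inj (euler_quats_deriv x)"
  using inj_euler_quat_deriv
  by (cases x) (auto simp: open_param_box_iff euler_quats_deriv_def inj_def)

lemma param_box_diff_null: "param_box - open_param_box \<in> null_sets lborel"
proof -
  define a :: euler_params where "a = (0, 0, 0, 0, 0, 0)"
  define b :: euler_params where "b = (pi, pi / 2, 2 * pi, pi, pi / 2, 2 * pi)"
  have boxes: "param_box = cbox a b" "open_param_box = box a b"
    unfolding param_box_def open_param_box_def a_def b_def by (simp_all add: cbox_Pair_eq box_Pair_eq)
  show ?thesis
    unfolding boxes by (rule null_sets_cbox_Diff_box)
qed

lemma euler_map_eq: "euler_map x = map_prod rep_k1 rep_k2 (euler_quats x)"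
  by (cases x) (simp add: euler_map_def euler_quats_def rep_k1_euler_quat rep_k2_euler_quat)

lemma euler_map_image: "euler_map ` param_box = Khat"
  by (simp add: Khat_eq euler_map_eq[abs_def] image_image[symmetric] euler_quats_image map_prod_surj_on)

lemma read_euler_map: "map_prod read_k1 read_k2 (euler_map x) = euler_quats x"
  by (simp add: euler_map_eq map_prod_def read_k1_rep_k1 read_k2_rep_k2 split: prod.split)

lemma euler_map_eq_imp_eq:
  "x \<in> param_box \<Longrightarrow> u \<in> open_param_box \<Longrightarrow> euler_map x = euler_map u \<Longrightarrow> x = u"
  by (metis read_euler_map euler_quats_eq_imp_eq)

lemma euler_map_has_derivative:
  obtains D where "(euler_map has_derivative D) (at x)"
proof -
  obtain D1 D2 where "(rep_k1 has_derivative D1) (at (fst (euler_quats x)))"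
    "(rep_k2 has_derivative D2) (at (snd (euler_quats x)))"
    using rep_k1_has_derivative rep_k2_has_derivative by blast
  from has_derivative_compose[OF euler_quats_has_derivative map_prod_has_derivative[OF this]]
  show thesis
    by (intro that) (simp add: euler_map_eq[abs_def])
qed

lemma euler_map_has_injective_derivative:
  assumes "u \<in> open_param_box"
  shows "\<exists>D. (euler_map has_derivative D) (at u) \<and> inj D"
proof -
  obtain D where D: "(euler_map has_derivative D) (at u)"
    using euler_map_has_derivative by metis
  have R: "bounded_linear (map_prod read_k1 read_k2)"
    unfolding map_prod_def case_prod_beta'
    by (intro bounded_linear_Pair bounded_linear_compose[OF bounded_linear_read_k1 bounded_linear_fst]
        bounded_linear_compose[OF bounded_linear_read_k2 bounded_linear_snd])
  have "inj D"
    by (rule inj_derivative_if_linear_left_inverse[OF D R read_euler_map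
          euler_quats_has_derivative inj_euler_quats_deriv[OF assms]])
  with D show ?thesis
    by blast
qed

lemma continuous_on_euler_map: "continuous_on S euler_map"
  by (metis euler_map_has_derivative has_derivative_continuous continuous_at_imp_continuous_on)

theorem lemma3p1:
  shows "euler_map ` param_box = Khat \<and>
    (\<exists>U. open U \<and> U \<subseteq> param_box \<and> param_box - U \<in> null_sets lborel \<and>
         inj_on euler_map U \<and>
         openin (top_of_set Khat) (euler_map ` U) \<and>
         (\<exists>g. homeomorphism U (euler_map ` U) euler_map g) \<and>
         (\<forall>x\<in>U. \<exists>D. (euler_map has_derivative D) (at x) \<and> inj D))"
proof -
  have "compact param_box"
    unfolding param_box_def by (intro compact_Times compact_Icc)
  moreover have "open open_param_box"
    unfolding open_param_box_def by (intro open_Times open_greaterThanLessThan)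
  moreover have "open_param_box \<subseteq> param_box"
    unfolding open_param_box_def param_box_def by auto
  moreover have "inj_on euler_map open_param_box"
    using \<open>open_param_box \<subseteq> param_box\<close> euler_map_eq_imp_eq by (auto simp: inj_on_def)
  ultimately show ?thesis
    using homeomorphism_on_singleton_fibres[OF _ continuous_on_euler_map _ _ euler_map_eq_imp_eq]
      euler_map_image param_box_diff_null euler_map_has_injective_derivative
    by metis
qed

end
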